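(* Let $2\le n\le m$ be integers with $\gamma_{2t}(K_n\Box K_m)<2n$. Then \[ \gamma_{2t}(K_n\Box K_m)\le\gamma_{2t}(K_{n+1}\Box K_m)\le\gamma_{2t}(K_n\Box K_m)+1. \]
   Context: For a graph $G=(V,E)$, a set $S\subseteq V$ is a total $2$-dominating set if every vertex of $V$ (including those in $S$) is adjacent to at least $2$ vertices of $S$; $\gamma_{2t}(G)$ is the minimum cardinality of such a set. $G\Box H$ denotes the Cartesian product: vertex set $V(G)\times V(H)$, with $(u_1,v_1)\sim(u_2,v_2)$ iff either $u_1=u_2$ and $v_1\sim v_2$, or $v_1=v_2$ and $u_1\sim u_2$. $K_n$ is the complete graph on $n$ vertices. *)

theory Defs
  imports Main
begin

definition complete_adj :: "nat \<Rightarrow> nat \<Rightarrow> bool" where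
  "complete_adj u v \<longleftrightarrow> u \<noteq> v"

definition K_verts :: "nat \<Rightarrow> nat set" where
  "K_verts n = {0..<n}"

definition cart_adj :: "('a \<Rightarrow> 'a \<Rightarrow> bool) \<Rightarrow> ('b \<Rightarrow> 'b \<Rightarrow> bool) \<Rightarrow> 'a \<times> 'b \<Rightarrow> 'a \<times> 'b \<Rightarrow> bool" where
  "cart_adj adjG adjH x y \<longleftrightarrow>
     (fst x = fst y \<and> adjH (snd x) (snd y)) \<or> (snd x = snd y \<and> adjG (fst x) (fst y))"

definition total_2_dominating :: "'a set \<Rightarrow> ('a \<Rightarrow> 'a \<Rightarrow> bool) \<Rightarrow> 'a set \<Rightarrow> bool" where
  "total_2_dominating V adj S \<longleftrightarrow>
     S \<subseteq> V \<and> (\<forall>v\<in>V. card {u\<in>S. adj v u} \<ge> 2)"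

definition gamma_2t :: "'a set \<Rightarrow> ('a \<Rightarrow> 'a \<Rightarrow> bool) \<Rightarrow> nat" where
  "gamma_2t V adj = Min {card S | S. total_2_dominating V adj S}"

definition gamma_2t_KK :: "nat \<Rightarrow> nat \<Rightarrow> nat" where
  "gamma_2t_KK n m = gamma_2t (K_verts n \<times> K_verts m) (cart_adj complete_adj complete_adj)"

end

theory Submission
  imports Defs "HOL-Combinatorics.Transposition"
begin

text \<open>
  Write the vertices of \<open>K\<^sub>N \<box> K\<^sub>M\<close> as cells \<open>(i, j)\<close> of an \<open>N \<times> M\<close> board; the neighbours of
  a cell are the other cells of its row and of its column. A total 2-dominating set \<open>S\<close> with
  \<open>|S| < 2N\<close> has a row containing at most one point of \<open>S\<close>; the cells of that row force every
  column to meet \<open>S\<close> and some column to meet it twice.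

  Upper bound: put a new point in the new row above a column containing two points of \<open>S\<close>.
  Lower bound: an optimal set \<open>T\<close> for \<open>K\<^sub>n\<^sub>+\<^sub>1 \<box> K\<^sub>m\<close> either has at least \<open>2n > \<gamma>\<^sub>2\<^sub>t(K\<^sub>n \<box> K\<^sub>m)\<close>
  points, or has a row \<open>r\<close> with at most one point. If that row is empty, deleting it leaves a
  total 2-dominating set of \<open>K\<^sub>n \<box> K\<^sub>m\<close>. If it holds a single point \<open>(r, c)\<close>, column \<open>c\<close> is not
  full (a full column plus one point in every other column would give \<open>n + m \<ge> 2n\<close> points), so
  the point can be moved to a free cell of column \<open>c\<close>, after which row \<open>r\<close> is empty.
\<close>

abbreviation rook_adj :: "nat \<times> nat \<Rightarrow> nat \<times> nat \<Rightarrow> bool" where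
  "rook_adj \<equiv> cart_adj complete_adj complete_adj"

abbreviation rook_t2d :: "nat \<Rightarrow> nat \<Rightarrow> (nat \<times> nat) set \<Rightarrow> bool" where
  "rook_t2d N M S \<equiv> total_2_dominating (K_verts N \<times> K_verts M) rook_adj S"

definition row_slice :: "(nat \<times> nat) set \<Rightarrow> nat \<Rightarrow> nat set" where
  "row_slice S i = {j. (i, j) \<in> S}"

definition col_slice :: "(nat \<times> nat) set \<Rightarrow> nat \<Rightarrow> nat set" where
  "col_slice S j = {i. (i, j) \<in> S}"

lemma rook_adj_Pair_iff:
  "rook_adj (p, q) (p', q') \<longleftrightarrow> (p = p' \<and> q \<noteq> q') \<or> (q = q' \<and> p \<noteq> p')"
  by (auto simp: cart_adj_def complete_adj_def)

lemma finite_row_slice: "finite S \<Longrightarrow> finite (row_slice S i)"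
  by (rule finite_subset[of _ "snd ` S"]) (force simp: row_slice_def)+

lemma finite_col_slice: "finite S \<Longrightarrow> finite (col_slice S j)"
  by (rule finite_subset[of _ "fst ` S"]) (force simp: col_slice_def)+

lemma card_rook_neighbours:
  assumes "finite S"
  shows "card {u\<in>S. rook_adj (p, q) u} = card (row_slice S p - {q}) + card (col_slice S q - {p})"
proof -
  have "{u\<in>S. rook_adj (p, q) u} = Pair p ` (row_slice S p - {q}) \<union> (\<lambda>i. (i, q)) ` (col_slice S q - {p})"
    by (auto simp: row_slice_def col_slice_def rook_adj_Pair_iff image_iff)
  moreover have "card (Pair p ` (row_slice S p - {q}) \<union> (\<lambda>i. (i, q)) ` (col_slice S q - {p}))
      = card (row_slice S p - {q}) + card (col_slice S q - {p})"
    using assms by (subst card_Un_disjoint)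
      (auto simp: finite_row_slice finite_col_slice card_image inj_on_def)
  ultimately show ?thesis by simp
qed

lemma card_eq_sum_row_slices:
  assumes "S \<subseteq> {..<N} \<times> {..<M}"
  shows "card S = (\<Sum>i<N. card (row_slice S i))"
proof -
  have "S = (SIGMA i:{..<N}. row_slice S i)"
    using assms by (auto simp: row_slice_def)
  moreover have "finite S" using assms finite_subset by blast
  ultimately show ?thesis by (metis card_SigmaI finite_lessThan finite_row_slice)
qed

lemma card_eq_sum_col_slices:
  assumes "S \<subseteq> {..<N} \<times> {..<M}"
  shows "card S = (\<Sum>j<M. card (col_slice S j))"
proof -
  have "card S = card (prod.swap ` S)" by (simp add: card_image)
  also have "\<dots> = (\<Sum>j<M. card (row_slice (prod.swap ` S) j))"
    using assms by (intro card_eq_sum_row_slices) auto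
  also have "row_slice (prod.swap ` S) = col_slice S"
    by (simp add: fun_eq_iff row_slice_def col_slice_def)
  finally show ?thesis .
qed

lemma rook_t2d_iff:
  "rook_t2d N M S \<longleftrightarrow>
     S \<subseteq> {..<N} \<times> {..<M} \<and> (\<forall>p<N. \<forall>q<M. 2 \<le> card {u\<in>S. rook_adj (p, q) u})"
  by (auto simp: total_2_dominating_def K_verts_def)

lemma finite_t2d_cards: "finite {card S |S. rook_t2d N M S}"
  by (rule finite_subset[of _ "card ` Pow ({..<N} \<times> {..<M})"]) (auto simp: rook_t2d_iff)

lemma gamma_2t_KK_le: "rook_t2d N M S \<Longrightarrow> gamma_2t_KK N M \<le> card S"
  unfolding gamma_2t_KK_def gamma_2t_def using finite_t2d_cards by (rule Min_le) blast

lemma two_le_card: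
  assumes "finite A" "x \<in> A" "y \<in> A" "x \<noteq> y"
  shows "2 \<le> card A"
  using assms card_mono[of A "{x, y}"] by simp

lemma gamma_2t_KK_attained:
  assumes "2 \<le> N" "2 \<le> M"
  obtains S where "rook_t2d N M S" "card S = gamma_2t_KK N M"
proof -
  have "rook_t2d N M ({..<N} \<times> {..<M})"
    unfolding rook_t2d_iff
  proof (intro conjI allI impI)
    fix p q assume "p < N" "q < M"
    moreover define p' where "p' = (if p = 0 then 1 else 0 :: nat)"
    moreover define q' where "q' = (if q = 0 then 1 else 0 :: nat)"
    ultimately show "2 \<le> card {u \<in> {..<N} \<times> {..<M}. rook_adj (p, q) u}"
      using assms by (intro two_le_card[where x = "(p', q)" and y = "(p, q')"])
        (auto simp: rook_adj_Pair_iff)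
  qed simp
  then have "gamma_2t_KK N M \<in> {card S |S. rook_t2d N M S}"
    unfolding gamma_2t_KK_def gamma_2t_def using finite_t2d_cards by (intro Min_in) auto
  then obtain S where "rook_t2d N M S" "gamma_2t_KK N M = card S" by blast
  then show ?thesis using that by simp
qed

lemma rook_t2d_cell:
  assumes "rook_t2d N M S" "p < N" "q < M"
  shows "2 \<le> card (row_slice S p - {q}) + card (col_slice S q - {p})"
proof -
  have "finite S" using assms(1) finite_subset by (auto simp: rook_t2d_iff)
  with assms show ?thesis by (simp add: rook_t2d_iff card_rook_neighbours)
qed

lemma exists_sparse_row:
  assumes "S \<subseteq> {..<N} \<times> {..<M}" "card S < 2 * N"
  obtains i where "i < N" "card (row_slice S i) \<le> 1"
proof (rule ccontr)
  assume "\<not> thesis"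
  with that have "\<forall>i<N. 2 \<le> card (row_slice S i)" by fastforce
  then have "(\<Sum>i<N. 2) \<le> card S"
    unfolding card_eq_sum_row_slices[OF assms(1)] by (intro sum_mono) auto
  with assms(2) show False by simp
qed

lemma col_slice_nonempty:
  assumes "rook_t2d N M S" "card S < 2 * N" "j < M"
  shows "col_slice S j \<noteq> {}"
proof
  assume empty: "col_slice S j = {}"
  have sub: "S \<subseteq> {..<N} \<times> {..<M}" using assms(1) by (simp add: rook_t2d_iff)
  then obtain i where i: "i < N" "card (row_slice S i) \<le> 1"
    using assms(2) by (rule exists_sparse_row)
  have "card (row_slice S i - {j}) \<le> card (row_slice S i)"
    using sub finite_subset by (intro card_mono finite_row_slice) auto
  with i empty rook_t2d_cell[OF assms(1) \<open>i < N\<close> assms(3)] show False by simp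
qed

lemma exists_col_slice_two:
  assumes "rook_t2d N M S" "card S < 2 * N" "0 < M"
  obtains j where "j < M" "2 \<le> card (col_slice S j)"
proof (rule ccontr)
  assume "\<not> thesis"
  with that have thin: "\<forall>j<M. card (col_slice S j) \<le> 1" by fastforce
  have sub: "S \<subseteq> {..<N} \<times> {..<M}" using assms(1) by (simp add: rook_t2d_iff)
  then have fin: "finite S" using finite_subset by blast
  obtain i where i: "i < N" "card (row_slice S i) \<le> 1"
    using sub assms(2) by (rule exists_sparse_row)
  obtain c where c: "c < M" "row_slice S i \<subseteq> {c}"
  proof (cases "row_slice S i = {}")
    case True
    with assms(3) that show ?thesis by blast
  next
    case False
    then obtain c where "c \<in> row_slice S i" by blast
    moreover have "row_slice S i \<subseteq> {c}"
      using i(2) calculation finite_row_slice[OF fin] card_le_Suc0_iff_eq by fastforce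
    ultimately show ?thesis using that sub by (auto simp: row_slice_def)
  qed
  have "card (col_slice S c - {i}) \<le> card (col_slice S c)"
    using fin by (intro card_mono finite_col_slice) auto
  moreover have "card (row_slice S i - {c}) = 0" using c(2) by (metis Diff_eq_empty_iff card.empty)
  moreover have "card (col_slice S c) \<le> 1" using thin c(1) by blast
  ultimately show False using rook_t2d_cell[OF assms(1) i(1) c(1)] by linarith
qed

lemma gamma_2t_KK_Suc_le:
  assumes "2 \<le> n" "2 \<le> m" "gamma_2t_KK n m < 2 * n"
  shows "gamma_2t_KK (Suc n) m \<le> gamma_2t_KK n m + 1"
proof -
  obtain S where S: "rook_t2d n m S" "card S = gamma_2t_KK n m"
    using assms(1,2) by (rule gamma_2t_KK_attained)
  have sub: "S \<subseteq> {..<n} \<times> {..<m}" using S(1) by (simp add: rook_t2d_iff)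
  then have fin: "finite S" using finite_subset by blast
  have small: "card S < 2 * n" using S(2) assms(3) by simp
  obtain j0 where j0: "j0 < m" "2 \<le> card (col_slice S j0)"
    using S(1) small by (rule exists_col_slice_two) (use assms(2) in simp)
  then obtain a b where ab: "a \<noteq> b" "(a, j0) \<in> S" "(b, j0) \<in> S"
    using fin finite_col_slice card_le_Suc0_iff_eq[of "col_slice S j0"]
    by (fastforce simp: col_slice_def)
  let ?S' = "insert (n, j0) S"
  have "rook_t2d (Suc n) m ?S'"
    unfolding rook_t2d_iff
  proof (intro conjI allI impI)
    show "?S' \<subseteq> {..<Suc n} \<times> {..<m}" using sub j0 by auto
  next
    fix p q assume pq: "p < Suc n" "q < m"
    show "2 \<le> card {u\<in>?S'. rook_adj (p, q) u}"
    proof (cases "p < n")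
      case True
      then have "2 \<le> card {u\<in>S. rook_adj (p, q) u}" using S(1) pq(2) by (simp add: rook_t2d_iff)
      also have "\<dots> \<le> card {u\<in>?S'. rook_adj (p, q) u}" using fin by (intro card_mono) auto
      finally show ?thesis .
    next
      case False
      then have "p = n" using pq by simp
      show ?thesis
      proof (cases "q = j0")
        case True
        with \<open>p = n\<close> ab sub fin show ?thesis
          by (intro two_le_card[where x = "(a, j0)" and y = "(b, j0)"]) (auto simp: rook_adj_Pair_iff)
      next
        case False
        obtain i where "(i, q) \<in> S"
          using col_slice_nonempty[OF S(1) small pq(2)] by (auto simp: col_slice_def)
        with \<open>p = n\<close> False sub fin show ?thesis
          by (intro two_le_card[where x = "(n, j0)" and y = "(i, q)"]) (auto simp: rook_adj_Pair_iff)
      qed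
    qed
  qed
  then have "gamma_2t_KK (Suc n) m \<le> card ?S'" by (rule gamma_2t_KK_le)
  also have "\<dots> \<le> card S + 1" using fin by (simp add: card_insert_if)
  finally show ?thesis using S(2) by simp
qed

lemma rook_adj_apfst:
  assumes "inj f"
  shows "rook_adj (apfst f u) (apfst f v) \<longleftrightarrow> rook_adj u v"
  using assms by (cases u; cases v) (auto simp: rook_adj_Pair_iff inj_eq)

lemma card_adj_image:
  assumes "inj g" "\<And>u v. adj (g u) (g v) \<longleftrightarrow> adj u v"
  shows "card {u \<in> g ` S. adj (g x) u} = card {u\<in>S. adj x u}"
proof -
  have "{u \<in> g ` S. adj (g x) u} = g ` {u\<in>S. adj x u}" using assms(2) by auto
  then show ?thesis using assms(1) by (simp add: card_image inj_on_subset)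
qed

text \<open>Swapping rows \<open>r\<close> and \<open>n\<close> turns a set avoiding row \<open>r\<close> into one inside the first \<open>n\<close> rows.\<close>

lemma gamma_2t_KK_le_delete_row:
  assumes sub: "S \<subseteq> ({..n} - {r}) \<times> {..<m}" and "r \<le> n"
    and dom: "\<And>p q. p \<le> n \<Longrightarrow> p \<noteq> r \<Longrightarrow> q < m \<Longrightarrow> 2 \<le> card {u\<in>S. rook_adj (p, q) u}"
  shows "gamma_2t_KK n m \<le> card S"
proof -
  let ?g = "apfst (transpose r n)"
  have inj: "inj ?g" by (simp add: inj_transpose)
  have adj: "\<And>u v. rook_adj (?g u) (?g v) \<longleftrightarrow> rook_adj u v"
    by (rule rook_adj_apfst[OF inj_transpose])
  have "rook_t2d n m (?g ` S)"
    unfolding rook_t2d_iff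
  proof (intro conjI allI impI)
    show "?g ` S \<subseteq> {..<n} \<times> {..<m}"
      using sub \<open>r \<le> n\<close> by (fastforce simp: transpose_def)
  next
    fix p q assume "p < n" "q < m"
    have "?g (?g (p, q)) = (p, q)" by simp
    moreover have "transpose r n p \<le> n" "transpose r n p \<noteq> r"
      using \<open>p < n\<close> \<open>r \<le> n\<close> by (auto simp: transpose_def)
    ultimately show "2 \<le> card {u \<in> ?g ` S. rook_adj (p, q) u}"
      using card_adj_image[where adj = rook_adj and S = S and x = "?g (p, q)", OF inj adj]
        dom[of "transpose r n p" q] \<open>q < m\<close> by simp
  qed
  then have "gamma_2t_KK n m \<le> card (?g ` S)" by (rule gamma_2t_KK_le)
  also have "card (?g ` S) = card S" by (rule card_image[OF inj_on_subset[OF inj subset_UNIV]])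
  finally show ?thesis .
qed

lemma exists_free_cell_in_col:
  assumes T: "rook_t2d N M T" and "card T < 2 * N" "card T + 1 < N + M" "c < M"
  obtains i where "i < N" "(i, c) \<notin> T"
proof (rule ccontr)
  assume "\<not> thesis"
  have sub: "T \<subseteq> {..<N} \<times> {..<M}" using T by (simp add: rook_t2d_iff)
  then have fin: "finite T" using finite_subset by blast
  from \<open>\<not> thesis\<close> that sub have full: "col_slice T c = {..<N}"
    by (auto simp: col_slice_def)
  have "(if j = c then N else 1) \<le> card (col_slice T j)" if "j < M" for j
  proof (cases "j = c")
    case False
    then show ?thesis
      using col_slice_nonempty[OF T assms(2) that] finite_col_slice[OF fin]
      by (simp add: Suc_le_eq card_gt_0_iff)
  qed (simp add: full)
  then have "(\<Sum>j<M. if j = c then N else 1) \<le> card T"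
    unfolding card_eq_sum_col_slices[OF sub] by (intro sum_mono) simp
  moreover have "(\<Sum>j<M. if j = c then N else 1) = N + (M - 1)"
    using \<open>c < M\<close> by (simp add: sum.If_cases flip: Diff_eq)
  ultimately show False using assms(3) by simp
qed

text \<open>Moving the only point \<open>(r, c)\<close> of row \<open>r\<close> to a free cell \<open>(i, c)\<close> keeps every vertex
  outside row \<open>r\<close> 2-dominated: \<open>(i, c)\<close> inherits the neighbours of \<open>(r, c)\<close>, which all lie in
  column \<open>c\<close>, and the other cells of column \<open>c\<close> trade the neighbour \<open>(r, c)\<close> for \<open>(i, c)\<close>.\<close>

lemma gamma_2t_KK_le_move_point:
  assumes T: "rook_t2d (Suc n) m T" and row: "row_slice T r = {c}"
    and "r \<le> n" "i \<le> n" and free: "(i, c) \<notin> T"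
  shows "gamma_2t_KK n m \<le> card T"
proof -
  have sub: "T \<subseteq> {..<Suc n} \<times> {..<m}"
    and dom: "\<And>p q. p < Suc n \<Longrightarrow> q < m \<Longrightarrow> 2 \<le> card {u\<in>T. rook_adj (p, q) u}"
    using T by (simp_all add: rook_t2d_iff)
  have fin: "finite T" using sub finite_subset by blast
  have rc: "(r, c) \<in> T" and only: "\<And>q. (r, q) \<in> T \<Longrightarrow> q = c"
    using row by (auto simp: row_slice_def)
  have "c < m" "i \<noteq> r" using rc sub free by auto
  let ?S = "insert (i, c) (T - {(r, c)})"
  have fin': "finite ?S" using fin by simp
  have "card ?S = Suc (card (T - {(r, c)}))" using fin free by simp
  also have "\<dots> = card T" using card_Suc_Diff1[OF fin rc] .
  finally have card_eq: "card ?S = card T" .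
  have sub': "?S \<subseteq> ({..n} - {r}) \<times> {..<m}"
    using sub only \<open>i \<le> n\<close> \<open>i \<noteq> r\<close> \<open>c < m\<close> by (fastforce simp: less_Suc_eq_le)
  have dom': "2 \<le> card {u\<in>?S. rook_adj (p, q) u}" if "p \<le> n" "p \<noteq> r" "q < m" for p q
  proof -
    consider "q \<noteq> c" | "q = c" "p = i" | "q = c" "p \<noteq> i" by blast
    then show ?thesis
    proof cases
      case 1
      have "2 \<le> card {u\<in>T. rook_adj (p, q) u}" using dom that by simp
      also have "\<dots> \<le> card {u\<in>?S. rook_adj (p, q) u}"
        using fin' 1 that by (intro card_mono) (auto simp: rook_adj_Pair_iff)
      finally show ?thesis .
    next
      case 2
      have "2 \<le> card {u\<in>T. rook_adj (r, c) u}" using dom \<open>r \<le> n\<close> \<open>c < m\<close> by simp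
      also have "\<dots> \<le> card {u\<in>?S. rook_adj (p, q) u}"
      proof (intro card_mono subsetI)
        fix u assume u: "u \<in> {u\<in>T. rook_adj (r, c) u}"
        obtain a b where ab: "u = (a, b)" by fastforce
        have "b = c" "a \<noteq> r" using u only[of b] by (auto simp: ab rook_adj_Pair_iff)
        with u ab free 2 show "u \<in> {u\<in>?S. rook_adj (p, q) u}" by (auto simp: rook_adj_Pair_iff)
      qed (use fin' in simp)
      finally show ?thesis .
    next
      case 3
      let ?N = "{u\<in>T. rook_adj (p, q) u}"
      have "(r, c) \<in> ?N" using rc 3 that by (simp add: rook_adj_Pair_iff)
      then have "2 \<le> card (insert (i, c) (?N - {(r, c)}))"
        using dom[of p q] that fin free by (simp add: card_Suc_Diff1)
      also have "\<dots> \<le> card {u\<in>?S. rook_adj (p, q) u}"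
        using fin' 3 by (intro card_mono) (auto simp: rook_adj_Pair_iff)
      finally show ?thesis .
    qed
  qed
  from gamma_2t_KK_le_delete_row[OF sub' \<open>r \<le> n\<close> dom'] card_eq show ?thesis by simp
qed

lemma gamma_2t_KK_le_Suc:
  assumes "2 \<le> n" "n \<le> m" "gamma_2t_KK n m < 2 * n"
  shows "gamma_2t_KK n m \<le> gamma_2t_KK (Suc n) m"
proof -
  have "2 \<le> Suc n" "2 \<le> m" using assms(1,2) by auto
  then obtain T where T: "rook_t2d (Suc n) m T" "card T = gamma_2t_KK (Suc n) m"
    by (rule gamma_2t_KK_attained)
  have sub: "T \<subseteq> {..<Suc n} \<times> {..<m}" using T(1) by (simp add: rook_t2d_iff)
  show ?thesis
  proof (cases "2 * n \<le> card T")
    case True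
    with T(2) assms(3) show ?thesis by simp
  next
    case False
    then have small: "card T < 2 * n" by simp
    then have small_Suc: "card T < 2 * Suc n" by simp
    with sub obtain r where r: "r < Suc n" "card (row_slice T r) \<le> 1"
      by (rule exists_sparse_row)
    show ?thesis
    proof (cases "row_slice T r = {}")
      case True
      then have "T \<subseteq> ({..n} - {r}) \<times> {..<m}"
        using sub by (fastforce simp: row_slice_def less_Suc_eq_le)
      then have "gamma_2t_KK n m \<le> card T"
        by (rule gamma_2t_KK_le_delete_row) (use T(1) r(1) in \<open>auto simp: rook_t2d_iff\<close>)
      with T(2) show ?thesis by simp
    next
      case False
      moreover have "finite (row_slice T r)"
        using sub finite_subset by (intro finite_row_slice) auto
      ultimately have "card (row_slice T r) = 1"
        using r(2) by (simp add: le_Suc_eq)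
      then obtain c where c: "row_slice T r = {c}" by (rule card_1_singletonE)
      then have "c < m" using sub by (auto simp: row_slice_def)
      have "card T + 1 < Suc n + m" using small assms(2) by simp
      from T(1) small_Suc this \<open>c < m\<close> obtain i where "i < Suc n" "(i, c) \<notin> T"
        by (rule exists_free_cell_in_col)
      then have "gamma_2t_KK n m \<le> card T"
        using T(1) c r(1) by (intro gamma_2t_KK_le_move_point) auto
      with T(2) show ?thesis by simp
    qed
  qed
qed

theorem mainTheorem6:
  fixes n m :: nat
  assumes "2 \<le> n" and "n \<le> m"
    and "gamma_2t_KK n m < 2 * n"
  shows "gamma_2t_KK n m \<le> gamma_2t_KK (n + 1) m \<and> gamma_2t_KK (n + 1) m \<le> gamma_2t_KK n m + 1"
proof -
  have "2 \<le> m" using assms(1,2) by simp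
  then show ?thesis
    using gamma_2t_KK_le_Suc[OF assms] gamma_2t_KK_Suc_le[OF assms(1) _ assms(3)] by simp
qed

end
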